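(* Let $(X,\rho)$ be a bounded metric space, $A\in CL(X)$, $(A_k)\subset CL(X)$ and let $f\colon[0,\infty)\to[0,\infty)$ be an unbounded modulus. If $(A_k)$ is $f$-Wijsman statistically convergent to $A$, then $(A_k)$ is Wijsman Cesàro summable to $A$, i.e. $\lim_{n\to\infty}\frac1n\sum_{k=1}^n d(x,A_k)=d(x,A)$ for every $x\in X$.
   Context: A modulus is a function $f\colon[0,\infty)\to[0,\infty)$ such that $f(x)=0$ iff $x=0$, $f$ is subadditive, increasing and continuous. $CL(X)$ denotes the set of all non-empty closed subsets of $(X,\rho)$, and $d(x,B)=\inf_{y\in B}\rho(x,y)$. For an unbounded modulus $f$ and $K\subseteq\mathbb N$, the $f$-density is $d^f(K)=\lim_{n\to\infty}\frac{f(|\{k\le n:k\in K\}|)}{f(n)}$ (when the limit exists). $(A_k)$ is $f$-Wijsman statistically convergent to $A$ if for every $x\in X$ and every $\varepsilon>0$ the set $\{k:|d(x,A_k)-d(x,A)|\ge\varepsilon\}$ has $f$-density $0$. *)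

theory Defs
  imports "HOL-Analysis.Analysis"
begin

definition modulus :: "(real \<Rightarrow> real) \<Rightarrow> bool" where
  "modulus f \<longleftrightarrow>
     (\<forall>x\<ge>0. f x \<ge> 0) \<and>
     (\<forall>x\<ge>0. f x = 0 \<longleftrightarrow> x = 0) \<and>
     (\<forall>x\<ge>0. \<forall>y\<ge>0. f (x + y) \<le> f x + f y) \<and>
     mono_on {0..} f \<and>
     continuous_on {0..} f"

definition unbounded_modulus :: "(real \<Rightarrow> real) \<Rightarrow> bool" where
  "unbounded_modulus f \<longleftrightarrow> modulus f \<and> \<not> bdd_above (f ` {0..})"

definition f_density_zero :: "(real \<Rightarrow> real) \<Rightarrow> nat set \<Rightarrow> bool" where
  "f_density_zero f K \<longleftrightarrow>
     (\<lambda>n. f (real (card {k \<in> K. 1 \<le> k \<and> k \<le> n})) / f (real n)) \<longlonglongrightarrow> 0"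

definition f_wijsman_stat_conv ::
  "(real \<Rightarrow> real) \<Rightarrow> (nat \<Rightarrow> 'a::metric_space set) \<Rightarrow> 'a set \<Rightarrow> bool" where
  "f_wijsman_stat_conv f A B \<longleftrightarrow>
     (\<forall>x. \<forall>\<epsilon>>0. f_density_zero f {k. \<bar>infdist x (A k) - infdist x B\<bar> \<ge> \<epsilon>})"

end

theory Submission
  imports Defs
begin

text \<open>Subadditivity and monotonicity of a modulus give \<open>c/n \<le> 2 f(c)/f(n)\<close> for \<open>0 \<le> c \<le> n\<close>,
  so f-density zero implies natural density zero. In a bounded space the sequence \<open>d(x,A\<^sub>k)\<close>
  is bounded, and a bounded statistically convergent sequence is Cesaro summable to its limit:
  the exceptional terms have density zero and each moves the mean by a bounded amount.\<close>

definition density_zero :: "nat set \<Rightarrow> bool" where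
  "density_zero K \<longleftrightarrow> (\<lambda>n. real (card {k \<in> K. 1 \<le> k \<and> k \<le> n}) / real n) \<longlonglongrightarrow> 0"

lemma modulus_mult_le:
  assumes "modulus f" "y \<ge> 0"
  shows "f (real p * y) \<le> real p * f y"
proof (induction p)
  case 0
  then show ?case using assms unfolding modulus_def by auto
next
  case (Suc p)
  have "f (real (Suc p) * y) = f (real p * y + y)" by (simp add: algebra_simps)
  also have "\<dots> \<le> f (real p * y) + f y"
    using assms unfolding modulus_def by auto
  also have "\<dots> \<le> real (Suc p) * f y" using Suc by (simp add: algebra_simps)
  finally show ?case .
qed

lemma modulus_ratio_le:
  assumes f: "modulus f" and "0 \<le> c" "c \<le> n" "0 < n"
  shows "c / n \<le> 2 * f c / f n"
proof (cases "c = 0")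
  case True
  then show ?thesis using f unfolding modulus_def by force
next
  case False
  with assms have c: "0 < c" by simp
  have fn: "0 < f n" using f \<open>0 < n\<close> unfolding modulus_def by (metis less_eq_real_def)
  define p where "p = nat \<lceil>n / c\<rceil>"
  have "n \<le> real p * c"
    using real_nat_ceiling_ge[of "n / c"] c unfolding p_def by (simp add: pos_divide_le_eq)
  then have "f n \<le> f (real p * c)"
    using f c \<open>0 < n\<close> unfolding modulus_def by (auto intro: mono_onD)
  also have "\<dots> \<le> real p * f c" using modulus_mult_le[OF f] c by simp
  also have "\<dots> \<le> 2 * (n / c) * f c"
  proof (rule mult_right_mono)
    have "real p < n / c + 1"
      using ceiling_correct[of "n / c"] c \<open>0 < n\<close> unfolding p_def by simp
    also have "\<dots> \<le> 2 * (n / c)" using c \<open>c \<le> n\<close> by (simp add: field_simps)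
    finally show "real p \<le> 2 * (n / c)" by simp
  qed (use f c in \<open>auto simp: modulus_def\<close>)
  finally show ?thesis using fn c \<open>0 < n\<close> by (simp add: field_simps)
qed

lemma density_zero_if_f_density_zero:
  assumes f: "modulus f" and "f_density_zero f K"
  shows "density_zero K"
proof -
  define c where "c n = real (card {k \<in> K. 1 \<le> k \<and> k \<le> n})" for n
  have c_nonneg: "0 \<le> c n" for n by (simp add: c_def)
  have c_le: "c n \<le> real n" for n
  proof -
    have "{k \<in> K. 1 \<le> k \<and> k \<le> n} \<subseteq> {1..n}" by auto
    from card_mono[OF finite_atLeastAtMost this] show ?thesis by (simp add: c_def)
  qed
  have "c n / real n \<le> 2 * f (c n) / f (real n)" if "n \<ge> 1" for n
    using modulus_ratio_le[OF f c_nonneg c_le] that by simp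
  then have upper: "\<forall>\<^sub>F n in sequentially. c n / real n \<le> 2 * f (c n) / f (real n)"
    by (rule eventually_sequentiallyI[of 1])
  have lower: "\<forall>\<^sub>F n in sequentially. 0 \<le> c n / real n"
    using c_nonneg by (intro always_eventually allI divide_nonneg_nonneg) auto
  have "(\<lambda>n. 2 * f (c n) / f (real n)) \<longlonglongrightarrow> 0"
    using tendsto_mult_right_zero[OF assms(2)[unfolded f_density_zero_def], of 2]
    unfolding c_def by simp
  from real_tendsto_sandwich[OF lower upper tendsto_const this]
  show ?thesis unfolding density_zero_def c_def .
qed

lemma mean_deviation_le:
  fixes a :: "nat \<Rightarrow> real"
  assumes bound: "\<And>k. \<bar>a k - L\<bar> \<le> e" and "n > 0" and "\<epsilon> \<ge> 0"
  shows "\<bar>(\<Sum>k=1..n. a k) / real n - L\<bar>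
           \<le> e * real (card {k \<in> {k. \<bar>a k - L\<bar> \<ge> \<epsilon>}. 1 \<le> k \<and> k \<le> n}) / real n + \<epsilon>"
proof -
  define K where "K = {k. \<bar>a k - L\<bar> \<ge> \<epsilon>}"
  have "(\<Sum>k=1..n. a k) / real n - L = (\<Sum>k=1..n. a k - L) / real n"
    using \<open>n > 0\<close> by (simp add: sum_subtractf field_simps)
  then have "\<bar>(\<Sum>k=1..n. a k) / real n - L\<bar> \<le> (\<Sum>k=1..n. \<bar>a k - L\<bar>) / real n"
    by (simp add: divide_right_mono)
  also have "\<dots> \<le> (\<Sum>k=1..n. e * of_bool (k \<in> K) + \<epsilon>) / real n"
  proof (intro divide_right_mono sum_mono)
    fix k
    show "\<bar>a k - L\<bar> \<le> e * of_bool (k \<in> K) + \<epsilon>"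
      using bound[of k] \<open>\<epsilon> \<ge> 0\<close> by (auto simp: K_def)
  qed simp
  also have "(\<Sum>k=1..n. e * of_bool (k \<in> K) + \<epsilon>) = e * (\<Sum>k=1..n. of_bool (k \<in> K)) + \<epsilon> * n"
    by (simp add: sum.distrib sum_distrib_left)
  also have "(\<Sum>k=1..n. of_bool (k \<in> K)) = real (card {k \<in> K. 1 \<le> k \<and> k \<le> n})"
  proof -
    have "{1..n} \<inter> {k. k \<in> K} = {k \<in> K. 1 \<le> k \<and> k \<le> n}" by auto
    then show ?thesis by (metis finite_atLeastAtMost sum_of_bool_eq)
  qed
  finally show ?thesis using \<open>n > 0\<close> unfolding K_def by (simp add: add_divide_distrib)
qed

lemma cesaro_tendsto_if_statistically_tendsto:
  fixes a :: "nat \<Rightarrow> real"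
  assumes bound: "\<And>k. \<bar>a k - L\<bar> \<le> e"
    and stat: "\<And>\<epsilon>. \<epsilon> > 0 \<Longrightarrow> density_zero {k. \<bar>a k - L\<bar> \<ge> \<epsilon>}"
  shows "(\<lambda>n. (\<Sum>k=1..n. a k) / real n) \<longlonglongrightarrow> L"
  unfolding tendsto_iff
proof (intro allI impI)
  fix r :: real assume "r > 0"
  have e: "e \<ge> 0" using bound[of 0] by linarith
  define c where "c n = real (card {k \<in> {k. \<bar>a k - L\<bar> \<ge> r / 2}. 1 \<le> k \<and> k \<le> n})" for n
  have lim: "(\<lambda>n. c n / real n) \<longlonglongrightarrow> 0"
    using stat[of "r / 2"] \<open>r > 0\<close> unfolding density_zero_def c_def by simp
  have "r / (2 * (e + 1)) > 0" using \<open>r > 0\<close> e by simp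
  with lim have "\<forall>\<^sub>F n in sequentially. c n / real n < r / (2 * (e + 1))"
    by (rule order_tendstoD)
  moreover have "\<forall>\<^sub>F n in sequentially. n \<ge> 1" by (rule eventually_ge_at_top)
  ultimately show "\<forall>\<^sub>F n in sequentially. dist ((\<Sum>k=1..n. a k) / real n) L < r"
  proof eventually_elim
    case (elim n)
    have "\<bar>(\<Sum>k=1..n. a k) / real n - L\<bar> \<le> e * (c n / real n) + r / 2"
      using mean_deviation_le[OF bound, of n "r / 2"] elim \<open>r > 0\<close> unfolding c_def by simp
    also have "\<dots> \<le> e * (r / (2 * (e + 1))) + r / 2"
      using elim e by (intro add_right_mono mult_left_mono) auto
    also have "\<dots> < r" using e \<open>r > 0\<close> by (simp add: field_simps)
    finally show ?case by (simp add: dist_real_def)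
  qed
qed

lemma bounded_UNIV_infdist_le:
  assumes "bounded (UNIV :: 'a::metric_space set)"
  shows "\<exists>e. \<forall>x :: 'a. \<forall>S. infdist x S \<le> e"
proof -
  obtain e where e: "\<And>y z :: 'a. dist y z \<le> e"
    using assms by (meson UNIV_I bounded_two_points)
  have "infdist x S \<le> e" for x :: 'a and S
  proof (cases "S = {}")
    case True
    then show ?thesis using e[of x x] by (simp add: infdist_def)
  next
    case False
    then obtain y where "y \<in> S" by blast
    then show ?thesis using infdist_le[of y S x] e[of x y] by linarith
  qed
  then show ?thesis by blast
qed

theorem corollary3p5:
  fixes A :: "nat \<Rightarrow> 'a::metric_space set" and B :: "'a set" and f :: "real \<Rightarrow> real"
  assumes "bounded (UNIV :: 'a set)"
    and "closed B" "B \<noteq> {}"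
    and "\<And>k. closed (A k)" "\<And>k. A k \<noteq> {}"
    and "unbounded_modulus f"
    and "f_wijsman_stat_conv f A B"
  shows "\<forall>x. (\<lambda>n. (\<Sum>k=1..n. infdist x (A k)) / real n) \<longlonglongrightarrow> infdist x B"
proof
  fix x :: 'a
  obtain e where e: "\<And>S. infdist x S \<le> e"
    using bounded_UNIV_infdist_le[OF assms(1)] by blast
  have "\<bar>infdist x (A k) - infdist x B\<bar> \<le> e" for k
    using e[of "A k"] e[of B] infdist_nonneg[of x "A k"] infdist_nonneg[of x B] by linarith
  moreover have "density_zero {k. \<bar>infdist x (A k) - infdist x B\<bar> \<ge> \<epsilon>}" if "\<epsilon> > 0" for \<epsilon>
  proof (rule density_zero_if_f_density_zero)
    show "modulus f" using assms(6) unfolding unbounded_modulus_def by simp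
    show "f_density_zero f {k. \<bar>infdist x (A k) - infdist x B\<bar> \<ge> \<epsilon>}"
      using assms(7) that unfolding f_wijsman_stat_conv_def by simp
  qed
  ultimately show "(\<lambda>n. (\<Sum>k=1..n. infdist x (A k)) / real n) \<longlonglongrightarrow> infdist x B"
    by (rule cesaro_tendsto_if_statistically_tendsto)
qed

end
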